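(* Let $\Omega\subset\mathbb{R}^n$ be a bounded Lipschitz domain, $\nu>0$, $\bm f\in \bm L^2(\Omega)$, and let $(\bm v,p)\in \bm H^1_0(\Omega)\times L^2_0(\Omega)$ be the weak solution of $$\nu(\nabla \bm v,\nabla \bm w)-(p,\mathrm{div}\,\bm w)=(\bm f,\bm w),\qquad (\mathrm{div}\,\bm v,q)=0\qquad\forall (\bm w,q)\in \bm H^1_0(\Omega)\times L^2_0(\Omega).$$ Then $$\|\nabla\bm v\|_{L^2(\Omega)}\le \frac{C_{PF}}{\nu}\|\mathbb{P}(\bm f)\|_{L^2(\Omega)}=C_{PF}\|\mathbb{P}(\Delta\bm v)\|_{L^2(\Omega)},$$ where $C_{PF}$ is the constant of the Poincaré–Friedrichs inequality $\|\bm w\|_{L^2(\Omega)}\le C_{PF}\|\nabla\bm w\|_{L^2(\Omega)}$ for $\bm w\in\bm H^1_0(\Omega)$.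
   Context: $\bm V^0:=\{\bm w\in\bm H^1_0(\Omega):\mathrm{div}\,\bm w=0\}$, $\bm L^2_\sigma(\Omega):=\{\bm w\in\bm L^2(\Omega): (\nabla q,\bm w)=0\ \forall q\in H^1(\Omega)\}$. For $\bm f\in\bm L^2(\Omega)$, $\mathbb{P}(\bm f)$ is the $\bm L^2$-orthogonal projection onto $\bm L^2_\sigma(\Omega)$ (Helmholtz–Hodge projector), so $\bm f=\nabla\alpha+\mathbb{P}(\bm f)$ with $\alpha\in H^1(\Omega)/\mathbb{R}$. For a functional $\bm g\in\bm H^{-1}(\Omega)$, $\mathbb{P}(\bm g)$ is its restriction to $\bm V^0$; here $\Delta\bm v\in\bm H^{-1}(\Omega)$ is defined by $\langle \Delta\bm v,\bm\psi\rangle=-(\nabla\bm v,\nabla\bm\psi)$, and $\mathbb{P}(\Delta\bm v)$ coincides on $\bm V^0$ with the $\bm L^2$ field $-\nu^{-1}\mathbb{P}(\bm f)$, whose $L^2$ norm is meant by $\|\mathbb{P}(\Delta\bm v)\|_{L^2(\Omega)}$. *)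

theory Defs
  imports "HOL-Analysis.Analysis"
begin

definition pd :: "'n::finite \<Rightarrow> (real^'n \<Rightarrow> 'b::real_normed_vector) \<Rightarrow> real^'n \<Rightarrow> 'b" where
  "pd j f x = frechet_derivative f (at x) (axis j 1)"

fun iter_pd :: "'n::finite list \<Rightarrow> (real^'n \<Rightarrow> 'b::real_normed_vector) \<Rightarrow> real^'n \<Rightarrow> 'b" where
  "iter_pd [] f = f"
| "iter_pd (j # js) f = pd j (iter_pd js f)"

definition smooth :: "(real^'n::finite \<Rightarrow> 'b::real_normed_vector) \<Rightarrow> bool" where
  "smooth f \<longleftrightarrow> (\<forall>js. (\<forall>x. iter_pd js f differentiable (at x)) \<and> continuous_on UNIV (iter_pd js f))"

definition test_fun :: "(real^'n::finite) set \<Rightarrow> (real^'n \<Rightarrow> 'b::real_normed_vector) \<Rightarrow> bool" where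
  "test_fun \<Omega> \<phi> \<longleftrightarrow> smooth \<phi> \<and> compact (closure {x. \<phi> x \<noteq> 0}) \<and> closure {x. \<phi> x \<noteq> 0} \<subseteq> \<Omega>"

definition jac :: "(real^'n::finite \<Rightarrow> real^'n) \<Rightarrow> real^'n \<Rightarrow> real^'n^'n" where
  "jac \<psi> x = (\<chi> i j. pd j (\<lambda>y. \<psi> y $ i) x)"

definition L2 :: "(real^'n::finite) set \<Rightarrow> (real^'n \<Rightarrow> 'b::euclidean_space) \<Rightarrow> bool" where
  "L2 \<Omega> f \<longleftrightarrow> f \<in> borel_measurable (lebesgue_on \<Omega>) \<and>
     integrable (lebesgue_on \<Omega>) (\<lambda>x. (norm (f x))\<^sup>2)"

definition L2norm :: "(real^'n::finite) set \<Rightarrow> (real^'n \<Rightarrow> 'b::euclidean_space) \<Rightarrow> real" where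
  "L2norm \<Omega> f = sqrt (\<integral>x. (norm (f x))\<^sup>2 \<partial>(lebesgue_on \<Omega>))"

definition L2_0 :: "(real^'n::finite) set \<Rightarrow> (real^'n \<Rightarrow> real) \<Rightarrow> bool" where
  "L2_0 \<Omega> q \<longleftrightarrow> L2 \<Omega> q \<and> (\<integral>x. q x \<partial>(lebesgue_on \<Omega>)) = 0"

definition weak_grad :: "(real^'n::finite) set \<Rightarrow> (real^'n \<Rightarrow> real) \<Rightarrow> (real^'n \<Rightarrow> real^'n) \<Rightarrow> bool" where
  "weak_grad \<Omega> u G \<longleftrightarrow> (\<forall>\<phi>::real^'n \<Rightarrow> real. test_fun \<Omega> \<phi> \<longrightarrow> (\<forall>j.
      (\<integral>x. u x * pd j \<phi> x \<partial>(lebesgue_on \<Omega>)) = - (\<integral>x. G x $ j * \<phi> x \<partial>(lebesgue_on \<Omega>))))"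

definition H1 :: "(real^'n::finite) set \<Rightarrow> (real^'n \<Rightarrow> real) \<Rightarrow> (real^'n \<Rightarrow> real^'n) \<Rightarrow> bool" where
  "H1 \<Omega> u G \<longleftrightarrow> L2 \<Omega> u \<and> L2 \<Omega> G \<and> weak_grad \<Omega> u G"

definition vweak_grad :: "(real^'n::finite) set \<Rightarrow> (real^'n \<Rightarrow> real^'n) \<Rightarrow> (real^'n \<Rightarrow> real^'n^'n) \<Rightarrow> bool" where
  "vweak_grad \<Omega> v D \<longleftrightarrow> (\<forall>i. weak_grad \<Omega> (\<lambda>x. v x $ i) (\<lambda>x. D x $ i))"

definition H1_0 :: "(real^'n::finite) set \<Rightarrow> (real^'n \<Rightarrow> real^'n) \<Rightarrow> (real^'n \<Rightarrow> real^'n^'n) \<Rightarrow> bool" where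
  "H1_0 \<Omega> v D \<longleftrightarrow> L2 \<Omega> v \<and> L2 \<Omega> D \<and> vweak_grad \<Omega> v D \<and>
     (\<exists>\<psi>::nat \<Rightarrow> real^'n \<Rightarrow> real^'n. (\<forall>k. test_fun \<Omega> (\<psi> k)) \<and>
        (\<lambda>k. L2norm \<Omega> (\<lambda>x. \<psi> k x - v x)) \<longlonglongrightarrow> 0 \<and>
        (\<lambda>k. L2norm \<Omega> (\<lambda>x. jac (\<psi> k) x - D x)) \<longlonglongrightarrow> 0)"

definition divg :: "(real^'n::finite \<Rightarrow> real^'n^'n) \<Rightarrow> real^'n \<Rightarrow> real" where
  "divg D x = (\<Sum>i\<in>UNIV. D x $ i $ i)"

definition V0 :: "(real^'n::finite) set \<Rightarrow> (real^'n \<Rightarrow> real^'n) \<Rightarrow> (real^'n \<Rightarrow> real^'n^'n) \<Rightarrow> bool" where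
  "V0 \<Omega> w D \<longleftrightarrow> H1_0 \<Omega> w D \<and> (AE x in lebesgue_on \<Omega>. divg D x = 0)"

definition L2_sigma :: "(real^'n::finite) set \<Rightarrow> (real^'n \<Rightarrow> real^'n) \<Rightarrow> bool" where
  "L2_sigma \<Omega> w \<longleftrightarrow> L2 \<Omega> w \<and>
     (\<forall>q G. H1 \<Omega> q G \<longrightarrow> (\<integral>x. G x \<bullet> w x \<partial>(lebesgue_on \<Omega>)) = 0)"

definition helmholtz_proj :: "(real^'n::finite) set \<Rightarrow> (real^'n \<Rightarrow> real^'n) \<Rightarrow> (real^'n \<Rightarrow> real^'n) \<Rightarrow> bool" where
  "helmholtz_proj \<Omega> f g \<longleftrightarrow> L2_sigma \<Omega> g \<and>
     (\<forall>w. L2_sigma \<Omega> w \<longrightarrow> (\<integral>x. (f x - g x) \<bullet> w x \<partial>(lebesgue_on \<Omega>)) = 0)"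

definition lipschitz_domain :: "(real^'n::finite) set \<Rightarrow> bool" where
  "lipschitz_domain \<Omega> \<longleftrightarrow> open \<Omega> \<and> connected \<Omega> \<and> \<Omega> \<noteq> {} \<and>
     (\<forall>x0\<in>frontier \<Omega>. \<exists>r>0. \<exists>e L. norm e = 1 \<and>
        (\<exists>\<gamma>::real^'n \<Rightarrow> real. L-lipschitz_on {y. y \<bullet> e = 0} \<gamma> \<and>
           \<Omega> \<inter> ball x0 r =
             {x \<in> ball x0 r. (x - x0) \<bullet> e < \<gamma> ((x - x0) - ((x - x0) \<bullet> e) *\<^sub>R e)}))"

end

theory Submission
  imports Defs "HOL-Computational_Algebra.Polynomial"
begin

text \<open>Integrating div v against the constant 1 shows that div v has mean zero, so it is an
  admissible pressure test function and the mass equation gives ||div v||^2 = 0. A divergence-free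
  H^1_0 field is L^2-orthogonal to all gradients; hence testing the momentum equation with a field
  of V^0 removes the pressure and replaces f by P f. With v itself this gives
  nu ||grad v||^2 = (P f, v) <= ||P f|| ||v|| <= C ||P f|| ||grad v||, and with an arbitrary field
  of V^0 it identifies P(Delta v) with -P(f)/nu. Integration by parts against H^1_0 fields reduces,
  via their test-function approximants, to the vanishing of integrals of partial derivatives of
  compactly supported C^1 functions. Finally C > 0: the Poincare-Friedrichs inequality applied to
  a nonzero smooth bump (a product of flat functions exp(-1/t)) shows this, and it settles the
  case grad v = 0.\<close>

section \<open>Flat functions\<close>

fun flat_deriv_poly :: "nat \<Rightarrow> real poly" where
  "flat_deriv_poly 0 = 1"
| "flat_deriv_poly (Suc k) = [:0, 0, 1:] * (flat_deriv_poly k - pderiv (flat_deriv_poly k))"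

text \<open>flat_deriv k is the k-th derivative of the flat function exp(-1/t) (t > 0), 0 (t \<le> 0);
  the recursion for the polynomials comes from
  d/dt (P(1/t) exp(-1/t)) = (P(1/t) - P'(1/t)) exp(-1/t) / t^2.\<close>
definition flat_deriv :: "nat \<Rightarrow> real \<Rightarrow> real" where
  "flat_deriv k t = (if t > 0 then poly (flat_deriv_poly k) (1 / t) * exp (- 1 / t) else 0)"

lemma tendsto_poly_recip_mult_exp_at_right_0:
  "((\<lambda>t. poly p (1 / t) * exp (- 1 / t)) \<longlongrightarrow> (0::real)) (at_right 0)"
proof -
  have "((\<lambda>u. \<Sum>i\<le>degree p. coeff p i * (u ^ i / exp u)) \<longlongrightarrow> (\<Sum>i\<le>degree p. coeff p i * 0)) at_top"
    by (intro tendsto_sum tendsto_mult tendsto_const tendsto_power_div_exp_0)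
  then have "((\<lambda>u. poly p u * exp (- u)) \<longlongrightarrow> 0) at_top"
    by (simp add: poly_altdef sum_divide_distrib exp_minus field_simps)
  from filterlim_compose[OF this filterlim_inverse_at_top_right]
  show ?thesis by (simp add: inverse_eq_divide)
qed

lemma flat_deriv_nonpos [simp]: "t \<le> 0 \<Longrightarrow> flat_deriv k t = 0"
  by (simp add: flat_deriv_def)

lemma has_real_derivative_flat_deriv_at_0:
  "(flat_deriv k has_real_derivative 0) (at 0)"
proof -
  have "\<forall>\<^sub>F t in at_left (0::real). 0 = flat_deriv k t / t"
    by (auto simp: eventually_at_left_field intro: exI[of _ "-1"])
  then have left: "((\<lambda>t. flat_deriv k t / t) \<longlongrightarrow> 0) (at_left 0)"
    by (rule Lim_transform_eventually[OF tendsto_const])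
  have "\<forall>\<^sub>F t in at_right (0::real). poly (pCons 0 (flat_deriv_poly k)) (1 / t) * exp (- 1 / t) = flat_deriv k t / t"
    by (auto simp: eventually_at_right_field flat_deriv_def intro!: exI[of _ 1])
  then have right: "((\<lambda>t. flat_deriv k t / t) \<longlongrightarrow> 0) (at_right 0)"
    by (rule Lim_transform_eventually[OF tendsto_poly_recip_mult_exp_at_right_0])
  from left right have "((\<lambda>t. (flat_deriv k t - flat_deriv k 0) / (t - 0)) \<longlongrightarrow> 0) (at 0)"
    by (simp add: filterlim_split_at)
  then show ?thesis by (simp add: has_field_derivative_iff)
qed

lemma has_real_derivative_flat_deriv:
  "(flat_deriv k has_real_derivative flat_deriv (Suc k) t) (at t)"
proof (cases t "0::real" rule: linorder_cases)
  case less
  have "((\<lambda>_. 0) has_real_derivative flat_deriv (Suc k) t) (at t)"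
    using less by simp
  then show ?thesis
    by (rule has_field_derivative_transform_within_open[where S="{..<0}"]) (use less in auto)
next
  case equal
  then show ?thesis using has_real_derivative_flat_deriv_at_0 by simp
next
  case greater
  let ?P = "flat_deriv_poly k"
  have "((\<lambda>t. poly ?P (1 / t) * exp (- 1 / t)) has_real_derivative
      poly (pderiv ?P) (1 / t) * (- 1 / t\<^sup>2) * exp (- 1 / t) + poly ?P (1 / t) * (exp (- 1 / t) * (1 / t\<^sup>2))) (at t)"
    using greater
    by (auto intro!: derivative_eq_intros DERIV_chain2[OF poly_DERIV] simp: power2_eq_square field_simps)
  also have "poly (pderiv ?P) (1 / t) * (- 1 / t\<^sup>2) * exp (- 1 / t) + poly ?P (1 / t) * (exp (- 1 / t) * (1 / t\<^sup>2))
      = flat_deriv (Suc k) t"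
    using greater by (simp add: flat_deriv_def power2_eq_square field_simps)
  finally show ?thesis
    by (rule has_field_derivative_transform_within_open[where S="{0<..}"])
      (use greater in \<open>auto simp: flat_deriv_def\<close>)
qed

lemma pd_of_has_derivative:
  "(F has_derivative F') (at x) \<Longrightarrow> pd j F x = F' (axis j 1)"
  unfolding pd_def by (simp add: frechet_derivative_at[symmetric])

lemma pd_diff:
  assumes "F differentiable (at x)" "G differentiable (at x)"
  shows "pd j (\<lambda>y. F y - G y) x = pd j F x - pd j G x"
proof -
  have "((\<lambda>y. F y - G y) has_derivative (\<lambda>h. frechet_derivative F (at x) h - frechet_derivative G (at x) h)) (at x)"
    using assms by (intro has_derivative_diff) (simp_all add: frechet_derivative_works)
  from pd_of_has_derivative[OF this] show ?thesis by (simp add: pd_def)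
qed

lemma pd_mult:
  fixes F G :: "real^'n::finite \<Rightarrow> real"
  assumes "F differentiable (at x)" "G differentiable (at x)"
  shows "pd j (\<lambda>y. F y * G y) x = F x * pd j G x + pd j F x * G x"
proof -
  have "((\<lambda>y. F y * G y) has_derivative
      (\<lambda>h. F x * frechet_derivative G (at x) h + frechet_derivative F (at x) h * G x)) (at x)"
    using assms by (intro has_derivative_mult) (simp_all add: frechet_derivative_works)
  from pd_of_has_derivative[OF this] show ?thesis by (simp add: pd_def)
qed

lemma pd_bounded_linear_comp:
  assumes "bounded_linear L" "G differentiable (at x)"
  shows "pd j (\<lambda>y. L (G y)) x = L (pd j G x)"
  using pd_of_has_derivative[OF bounded_linear.has_derivative[OF assms(1) assms(2)[unfolded frechet_derivative_works]]]
  by (simp add: pd_def)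

lemma pd_eq_0_outside:
  assumes "closed K" "\<And>y. y \<notin> K \<Longrightarrow> F y = 0" "x \<notin> K"
  shows "pd j F x = 0"
proof -
  have "(F has_derivative (\<lambda>_. 0)) (at x)"
    by (rule has_derivative_transform_within_open[where s="- K", OF has_derivative_const]) (use assms in auto)
  then show ?thesis by (simp add: pd_of_has_derivative)
qed

lemma iter_pd_append: "iter_pd (js @ ks) F = iter_pd js (iter_pd ks F)"
  by (induction js) simp_all

lemma smooth_differentiable: "smooth F \<Longrightarrow> F differentiable (at x)"
  unfolding smooth_def by (metis iter_pd.simps(1))

lemma smooth_continuous_on: "smooth F \<Longrightarrow> continuous_on UNIV F"
  unfolding smooth_def by (metis iter_pd.simps(1))

lemma smooth_pd:
  assumes "smooth F"
  shows "smooth (pd j F)"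
proof -
  have "iter_pd js (pd j F) = iter_pd (js @ [j]) F" for js
    by (simp add: iter_pd_append)
  then show ?thesis using assms unfolding smooth_def by simp
qed

lemma continuous_on_pd_smooth: "smooth F \<Longrightarrow> continuous_on UNIV (pd j F)"
  by (intro smooth_continuous_on smooth_pd)

lemma smooth_if_pd_closed:
  assumes "F \<in> S"
    and diff: "\<And>G x. G \<in> S \<Longrightarrow> G differentiable (at x)"
    and closed: "\<And>G j. G \<in> S \<Longrightarrow> pd j G \<in> S"
  shows "smooth F"
proof -
  have iter: "iter_pd js F \<in> S" for js
    by (induction js) (simp_all add: \<open>F \<in> S\<close> closed)
  have "continuous_on UNIV G" if "G \<in> S" for G
    using diff[OF that] by (simp add: continuous_at_imp_continuous_on differentiable_imp_continuous_within)
  with iter diff show ?thesis unfolding smooth_def by blast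
qed

lemma smooth_bounded_linear_comp:
  assumes L: "bounded_linear L" and G: "smooth G"
  shows "smooth (\<lambda>y. L (G y))"
proof -
  have iter: "iter_pd js (\<lambda>y. L (G y)) = (\<lambda>y. L (iter_pd js G y))" for js
  proof (induction js)
    case (Cons j js)
    have "pd j (\<lambda>y. L (iter_pd js G y)) = (\<lambda>y. L (pd j (iter_pd js G) y))"
      using G by (intro ext pd_bounded_linear_comp[OF L]) (simp add: smooth_def)
    with Cons.IH show ?case by simp
  qed simp
  have "(\<lambda>y. L (iter_pd js G y)) differentiable (at x)" for js x
  proof -
    have "(L \<circ> iter_pd js G) differentiable (at x)"
      using G by (intro differentiable_chain_at bounded_linear_imp_differentiable[OF L]) (simp add: smooth_def)
    then show ?thesis by (simp add: o_def)
  qed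
  moreover have "continuous_on UNIV (\<lambda>y. L (iter_pd js G y))" for js
    using G by (intro bounded_linear.continuous_on[OF L]) (simp add: smooth_def)
  ultimately show ?thesis unfolding smooth_def iter by blast
qed

section \<open>Smooth bumps\<close>

definition bump_factor :: "real \<Rightarrow> nat \<Rightarrow> nat \<Rightarrow> real \<Rightarrow> real" where
  "bump_factor r a b t = flat_deriv a (r + t) * flat_deriv b (r - t)"

lemma has_real_derivative_bump_factor:
  "(bump_factor r a b has_real_derivative bump_factor r (Suc a) b t - bump_factor r a (Suc b) t) (at t)"
proof -
  have "((\<lambda>t. flat_deriv a (r + t)) has_real_derivative flat_deriv (Suc a) (r + t) * 1) (at t)"
    by (rule DERIV_chain2[OF has_real_derivative_flat_deriv]) (auto intro!: derivative_eq_intros)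
  moreover have "((\<lambda>t. flat_deriv b (r - t)) has_real_derivative flat_deriv (Suc b) (r - t) * (- 1)) (at t)"
    by (rule DERIV_chain2[OF has_real_derivative_flat_deriv]) (auto intro!: derivative_eq_intros)
  ultimately show ?thesis
    unfolding bump_factor_def by (auto intro: DERIV_mult[THEN DERIV_cong] simp: algebra_simps)
qed

text \<open>The multi-indices a, b count how often the two flat factors of each coordinate have been
  differentiated, which makes the family closed under pd.\<close>
definition box_bump :: "real^'n::finite \<Rightarrow> real \<Rightarrow> ('n \<Rightarrow> nat) \<Rightarrow> ('n \<Rightarrow> nat) \<Rightarrow> real^'n \<Rightarrow> real" where
  "box_bump c r a b x = (\<Prod>i\<in>UNIV. bump_factor r (a i) (b i) (x $ i - c $ i))"

lemma has_derivative_box_bump: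
  "(box_bump c r a b has_derivative
     (\<lambda>h. \<Sum>i\<in>UNIV. (bump_factor r (Suc (a i)) (b i) (x $ i - c $ i) - bump_factor r (a i) (Suc (b i)) (x $ i - c $ i))
        * h $ i * (\<Prod>k\<in>UNIV - {i}. bump_factor r (a k) (b k) (x $ k - c $ k)))) (at x)"
proof -
  have "((\<lambda>x. bump_factor r (a i) (b i) (x $ i - c $ i)) has_derivative
      (\<lambda>h. (bump_factor r (Suc (a i)) (b i) (x $ i - c $ i) - bump_factor r (a i) (Suc (b i)) (x $ i - c $ i)) * h $ i)) (at x)"
    for i
  proof -
    have "((\<lambda>x. x $ i - c $ i) has_derivative (\<lambda>h. h $ i)) (at x)"
      using has_derivative_diff[OF bounded_linear_imp_has_derivative[OF bounded_linear_vec_nth] has_derivative_const]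
      by simp
    from has_derivative_compose[OF this has_real_derivative_bump_factor[unfolded has_field_derivative_def]]
    show ?thesis by simp
  qed
  then show ?thesis
    unfolding box_bump_def[abs_def] by (rule has_derivative_prod)
qed

lemma box_bump_split:
  assumes "\<And>k. k \<noteq> j \<Longrightarrow> a' k = a k \<and> b' k = b k"
  shows "box_bump c r a' b' x
    = bump_factor r (a' j) (b' j) (x $ j - c $ j) * (\<Prod>k\<in>UNIV - {j}. bump_factor r (a k) (b k) (x $ k - c $ k))"
  unfolding box_bump_def using assms by (subst prod.remove[of _ j]) (auto intro!: prod.cong)

lemma pd_box_bump:
  "pd j (box_bump c r a b) x = box_bump c r (a(j := Suc (a j))) b x - box_bump c r a (b(j := Suc (b j))) x"
proof -
  have "pd j (box_bump c r a b) x
      = (bump_factor r (Suc (a j)) (b j) (x $ j - c $ j) - bump_factor r (a j) (Suc (b j)) (x $ j - c $ j))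
        * (\<Prod>k\<in>UNIV - {j}. bump_factor r (a k) (b k) (x $ k - c $ k))"
    by (subst pd_of_has_derivative[OF has_derivative_box_bump], subst sum.remove[of _ j]) (auto simp: axis_def)
  then show ?thesis
    using box_bump_split[of j "a(j := Suc (a j))" a b b] box_bump_split[of j a a "b(j := Suc (b j))" b]
    by (simp add: left_diff_distrib)
qed

inductive_set box_bump_span :: "real^'n::finite \<Rightarrow> real \<Rightarrow> (real^'n \<Rightarrow> real) set" for c r where
  base: "box_bump c r a b \<in> box_bump_span c r"
| diff: "F \<in> box_bump_span c r \<Longrightarrow> G \<in> box_bump_span c r \<Longrightarrow> (\<lambda>x. F x - G x) \<in> box_bump_span c r"

lemma box_bump_span_differentiable: "F \<in> box_bump_span c r \<Longrightarrow> F differentiable (at x)"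
proof (induction rule: box_bump_span.induct)
  case (base a b)
  then show ?case by (rule differentiableI[OF has_derivative_box_bump])
next
  case (diff F G)
  then show ?case by (auto simp: differentiable_def intro: has_derivative_diff)
qed

lemma pd_box_bump_span: "F \<in> box_bump_span c r \<Longrightarrow> pd j F \<in> box_bump_span c r"
proof (induction rule: box_bump_span.induct)
  case (base a b)
  have "pd j (box_bump c r a b) = (\<lambda>x. box_bump c r (a(j := Suc (a j))) b x - box_bump c r a (b(j := Suc (b j))) x)"
    by (rule ext) (rule pd_box_bump)
  then show ?case by (simp add: box_bump_span.intros)
next
  case (diff F G)
  have "pd j (\<lambda>x. F x - G x) = (\<lambda>x. pd j F x - pd j G x)"
    using diff.hyps by (intro ext pd_diff box_bump_span_differentiable)
  then show ?case using diff.IH by (simp add: box_bump_span.diff)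
qed

lemma smooth_box_bump: "smooth (box_bump c r a b)"
  by (rule smooth_if_pd_closed[OF box_bump_span.base box_bump_span_differentiable pd_box_bump_span])

lemma box_bump_nonzero_iff:
  "box_bump c r (\<lambda>_. 0) (\<lambda>_. 0) x \<noteq> 0 \<longleftrightarrow> (\<forall>i. \<bar>x $ i - c $ i\<bar> < r)"
proof -
  have "box_bump c r (\<lambda>_. 0) (\<lambda>_. 0) x \<noteq> 0 \<longleftrightarrow> (\<forall>i. 0 < r + (x $ i - c $ i) \<and> 0 < r - (x $ i - c $ i))"
    by (auto simp: box_bump_def bump_factor_def flat_deriv_def)
  also have "\<dots> \<longleftrightarrow> (\<forall>i. \<bar>x $ i - c $ i\<bar> < r)"
    by (intro all_cong1) arith
  finally show ?thesis .
qed

section \<open>Integrals of partial derivatives\<close>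

lemma bounded_compact_support:
  fixes f :: "'a::topological_space \<Rightarrow> 'b::real_normed_vector"
  assumes "continuous_on UNIV f" "compact K" "\<And>x. x \<notin> K \<Longrightarrow> f x = 0"
  obtains B where "\<And>x. norm (f x) \<le> B"
proof -
  have "bounded (f ` K)"
    using assms by (intro compact_imp_bounded compact_continuous_image) (auto intro: continuous_on_subset)
  then obtain B where "\<And>x. x \<in> K \<Longrightarrow> norm (f x) \<le> B"
    by (auto simp: bounded_iff)
  then have "norm (f x) \<le> max B 0" for x
    using assms(3)[of x] by (cases "x \<in> K") (auto simp: le_max_iff_disj)
  then show thesis by (rule that)
qed

lemma integrable_compact_support:
  fixes G :: "'a::euclidean_space \<Rightarrow> 'b::{banach, second_countable_topology}"
  assumes "continuous_on UNIV G" "compact K" "\<And>x. x \<notin> K \<Longrightarrow> G x = 0"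
  shows "integrable lborel G"
proof -
  have "(\<lambda>x. indicator K x *\<^sub>R G x) = G"
    using assms(3) by (auto simp: indicator_def)
  with borel_integrable_compact[OF assms(2) continuous_on_subset[OF assms(1)]] show ?thesis
    by simp
qed

lemma integrable_on_compact_support:
  fixes G :: "'a::euclidean_space \<Rightarrow> real"
  assumes "continuous_on UNIV G" "compact K" "\<And>x. x \<notin> K \<Longrightarrow> G x = 0" "\<Omega> \<in> sets lebesgue"
  shows "integrable (lebesgue_on \<Omega>) G"
proof -
  have "integrable lebesgue G"
    using integrable_compact_support[OF assms(1-3)] assms(1)
    by (simp add: integrable_completion borel_measurable_continuous_onI)
  then have "integrable lebesgue (\<lambda>x. indicator \<Omega> x *\<^sub>R G x)"
    by (rule integrable_mult_indicator[OF assms(4)])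
  with assms(4) show ?thesis
    by (simp add: integrable_restrict_space)
qed

lemma integral_lborel_translate:
  fixes F :: "'a::euclidean_space \<Rightarrow> real"
  assumes "F \<in> borel_measurable borel"
  shows "integral\<^sup>L lborel (\<lambda>x. F (x + c)) = integral\<^sup>L lborel F"
  using integral_distr[of "(+) c" lborel borel F] assms by (simp add: lborel_distr_plus add.commute)

lemma has_real_derivative_along_axis:
  assumes "F differentiable (at (x + t *\<^sub>R axis j 1))"
  shows "((\<lambda>s. F (x + s *\<^sub>R axis j 1)) has_real_derivative pd j F (x + t *\<^sub>R axis j 1)) (at t)"
proof -
  let ?F' = "frechet_derivative F (at (x + t *\<^sub>R axis j 1))"
  have "((\<lambda>s. F (x + s *\<^sub>R axis j 1)) has_derivative (\<lambda>s. ?F' (s *\<^sub>R axis j 1))) (at t)"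
    using assms by (intro has_derivative_compose[of "\<lambda>s. x + s *\<^sub>R axis j 1" _ t _ F])
      (auto intro!: derivative_eq_intros simp: frechet_derivative_works)
  moreover have "?F' (s *\<^sub>R axis j 1) = ?F' (axis j 1) * s" for s
    using linear_scale[OF linear_frechet_derivative[OF assms]] by simp
  ultimately show ?thesis
    by (simp add: has_field_derivative_def pd_def)
qed

lemma integral_difference_quotient_eq_0:
  fixes F :: "'a::euclidean_space \<Rightarrow> real"
  assumes cont: "continuous_on UNIV F" and K: "compact K" and supp: "\<And>x. x \<notin> K \<Longrightarrow> F x = 0"
  shows "integral\<^sup>L lborel (\<lambda>x. (F (x + c) - F x) / h) = 0"
proof -
  have "integrable lborel (\<lambda>x. F (x + c))"
  proof (rule integrable_compact_support)
    show "continuous_on UNIV (\<lambda>x. F (x + c))"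
      by (rule continuous_on_compose2[OF cont]) (auto intro!: continuous_intros)
    show "compact ((\<lambda>x. x - c) ` K)"
      using K by (intro compact_continuous_image) (auto intro!: continuous_intros)
    show "F (x + c) = 0" if "x \<notin> (\<lambda>x. x - c) ` K" for x
      using that supp[of "x + c"] by (metis add_diff_cancel_right' image_eqI)
  qed
  moreover have "integrable lborel F"
    by (rule integrable_compact_support[OF cont K supp])
  ultimately show ?thesis
    using integral_lborel_translate[of F c] cont
    by (simp add: Bochner_Integration.integral_diff borel_measurable_continuous_onI)
qed

lemma abs_difference_quotient_le:
  fixes F :: "real^'n::finite \<Rightarrow> real"
  assumes "\<And>y. F differentiable (at y)" "\<And>y. \<bar>pd j F y\<bar> \<le> M" "h > 0"
  shows "\<bar>(F (x + h *\<^sub>R axis j 1) - F x) / h\<bar> \<le> M"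
proof -
  obtain z where "0 < z" "z < h"
    and "F (x + h *\<^sub>R axis j 1) - F (x + 0 *\<^sub>R axis j 1) = (h - 0) * pd j F (x + z *\<^sub>R axis j 1)"
    using MVT2[OF \<open>h > 0\<close>, of "\<lambda>t. F (x + t *\<^sub>R axis j 1)" "\<lambda>t. pd j F (x + t *\<^sub>R axis j 1)"]
      has_real_derivative_along_axis assms(1) by blast
  with assms(2,3) show ?thesis by simp
qed

lemma tendsto_difference_quotient_pd:
  assumes "F differentiable (at x)" "filterlim h (at 0) net"
  shows "((\<lambda>k. (F (x + h k *\<^sub>R axis j 1) - F x) / h k) \<longlongrightarrow> pd j F x) net"
proof -
  have "((\<lambda>t. (F (x + t *\<^sub>R axis j 1) - F x) / t) \<longlongrightarrow> pd j F x) (at 0)"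
    using has_real_derivative_along_axis[of F x 0 j] assms(1) by (simp add: DERIV_def)
  from filterlim_compose[OF this assms(2)] show ?thesis .
qed

lemma add_notin_if_notin_thickening:
  assumes "x \<notin> {y + z |y z. y \<in> K \<and> z \<in> cball 0 1}" "norm d \<le> 1"
  shows "x + d \<notin> K"
proof
  assume "x + d \<in> K"
  with \<open>norm d \<le> 1\<close> have "(x + d) + - d \<in> {y + z |y z. y \<in> K \<and> z \<in> cball 0 1}"
    by fastforce
  with assms(1) show False by auto
qed

lemma abs_difference_quotient_le_indicator:
  fixes F :: "real^'n::finite \<Rightarrow> real"
  assumes "\<And>y. F differentiable (at y)" "\<And>y. \<bar>pd j F y\<bar> \<le> M"
    and "\<And>y. y \<notin> K \<Longrightarrow> F y = 0" "0 < h" "h \<le> 1"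
  shows "\<bar>(F (x + h *\<^sub>R axis j 1) - F x) / h\<bar> \<le> M * indicator {y + z |y z. y \<in> K \<and> z \<in> cball 0 1} x"
proof (cases "x \<in> {y + z |y z. y \<in> K \<and> z \<in> cball 0 1}")
  case True
  then show ?thesis
    using abs_difference_quotient_le[OF assms(1,2,4)] by simp
next
  case False
  then have "x + h *\<^sub>R axis j 1 \<notin> K" "x + 0 \<notin> K"
    using add_notin_if_notin_thickening[OF False, of "h *\<^sub>R axis j 1"]
      add_notin_if_notin_thickening[OF False, of 0] assms(4,5) by simp_all
  with False assms(3) show ?thesis
    by simp
qed

text \<open>The difference quotients in direction j converge pointwise to pd j F, are dominated by a
  multiple of the indicator of a compact neighbourhood of the support, and have integral 0 by
  translation invariance of Lebesgue measure.\<close>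
lemma integral_pd_eq_0:
  fixes F :: "real^'n::finite \<Rightarrow> real"
  assumes diff: "\<And>x. F differentiable (at x)" and cont: "continuous_on UNIV (pd j F)"
    and K: "compact K" and supp: "\<And>x. x \<notin> K \<Longrightarrow> F x = 0"
  shows "integral\<^sup>L lborel (pd j F) = 0"
proof -
  let ?e = "axis j (1::real)"
  define h :: "nat \<Rightarrow> real" where "h k = 1 / Suc k" for k
  define K1 where "K1 = {x + y |x y. x \<in> K \<and> y \<in> cball (0::real^'n) 1}"
  have "compact K1"
    unfolding K1_def using K by (intro compact_sums) auto
  have h: "0 < h k" "h k \<le> 1" for k
    by (auto simp: h_def)
  have contF: "continuous_on UNIV F"
    using diff by (simp add: continuous_at_imp_continuous_on differentiable_imp_continuous_within)
  obtain M where M: "\<And>y. \<bar>pd j F y\<bar> \<le> M"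
    using bounded_compact_support[OF cont K] pd_eq_0_outside[OF compact_imp_closed[OF K] supp] by auto
  have "(\<lambda>k. integral\<^sup>L lborel (\<lambda>x. (F (x + h k *\<^sub>R ?e) - F x) / h k)) \<longlonglongrightarrow> integral\<^sup>L lborel (pd j F)"
  proof (rule integral_dominated_convergence[where w="\<lambda>x. M * indicator K1 x"])
    show "(\<lambda>x. (F (x + h k *\<^sub>R ?e) - F x) / h k) \<in> borel_measurable lborel" for k
    proof -
      have "continuous_on UNIV (\<lambda>x. (F (x + h k *\<^sub>R ?e) - F x) / h k)"
        using h(1)[of k] by (intro continuous_intros continuous_on_compose2[OF contF]) auto
      then show ?thesis by (simp add: borel_measurable_continuous_onI)
    qed
    show "pd j F \<in> borel_measurable lborel"
      using cont by (simp add: borel_measurable_continuous_onI)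
    show "integrable lborel (\<lambda>x. M * indicator K1 x)"
      using \<open>compact K1\<close> emeasure_bounded_finite[OF compact_imp_bounded[OF \<open>compact K1\<close>]]
      by (intro integrable_mult_right integrable_real_indicator) (auto simp: borel_compact)
    have "filterlim h (at 0) sequentially"
      unfolding h_def by (rule filterlim_atI[OF LIMSEQ_Suc[OF lim_const_over_n]]) auto
    then show "AE x in lborel. (\<lambda>k. (F (x + h k *\<^sub>R ?e) - F x) / h k) \<longlonglongrightarrow> pd j F x"
      by (intro AE_I2 tendsto_difference_quotient_pd diff)
    show "AE x in lborel. norm ((F (x + h k *\<^sub>R ?e) - F x) / h k) \<le> M * indicator K1 x" for k
      unfolding K1_def using abs_difference_quotient_le_indicator[OF diff M supp h] by simp
  qed
  moreover have "integral\<^sup>L lborel (\<lambda>x. (F (x + h k *\<^sub>R ?e) - F x) / h k) = 0" for k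
    by (rule integral_difference_quotient_eq_0[OF contF K supp])
  ultimately have "(\<lambda>k. 0) \<longlonglongrightarrow> integral\<^sup>L lborel (pd j F)"
    by (simp only:)
  then show ?thesis
    by (simp add: LIMSEQ_const_iff)
qed

lemma integral_pd_eq_0_on:
  fixes F :: "real^'n::finite \<Rightarrow> real"
  assumes "\<And>x. F differentiable (at x)" "continuous_on UNIV (pd j F)"
    and "compact K" "\<And>x. x \<notin> K \<Longrightarrow> F x = 0" "K \<subseteq> \<Omega>" "\<Omega> \<in> sets lebesgue"
  shows "integral\<^sup>L (lebesgue_on \<Omega>) (pd j F) = 0"
proof -
  have "indicator \<Omega> x *\<^sub>R pd j F x = pd j F x" for x
    using pd_eq_0_outside[OF compact_imp_closed, of K F x] assms(3-5) by (cases "x \<in> \<Omega>") auto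
  then have "(\<lambda>x. indicator \<Omega> x *\<^sub>R pd j F x) = pd j F" ..
  then have "integral\<^sup>L (lebesgue_on \<Omega>) (pd j F) = integral\<^sup>L lebesgue (pd j F)"
    using integral_restrict_space[of \<Omega> lebesgue "pd j F"] assms(6) by simp
  also have "\<dots> = integral\<^sup>L lborel (pd j F)"
    using assms(2) by (intro integral_completion) (simp add: borel_measurable_continuous_onI)
  also have "\<dots> = 0"
    by (rule integral_pd_eq_0[OF assms(1-4)])
  finally show ?thesis .
qed

lemma L2_bounded_linear:
  fixes T :: "'b::euclidean_space \<Rightarrow> 'c::euclidean_space"
  assumes T: "bounded_linear T" and u: "L2 \<Omega> u"
  shows "L2 \<Omega> (\<lambda>x. T (u x))"
proof -
  obtain K where K: "\<And>y. norm (T y) \<le> norm y * K" "K > 0"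
    using bounded_linear.pos_bounded[OF T] by blast
  have meas: "(\<lambda>x. T (u x)) \<in> borel_measurable (lebesgue_on \<Omega>)"
    using u unfolding L2_def
    by (intro measurable_compose[OF _ borel_measurable_continuous_onI[OF linear_continuous_on[OF T]]]) blast
  have bound: "(norm (T y))\<^sup>2 \<le> K\<^sup>2 * (norm y)\<^sup>2" for y
  proof -
    have "(norm (T y))\<^sup>2 \<le> (norm y * K)\<^sup>2"
      using K(1)[of y] by (intro power_mono) simp_all
    then show ?thesis by (simp add: power_mult_distrib mult.commute)
  qed
  have "integrable (lebesgue_on \<Omega>) (\<lambda>x. K\<^sup>2 * (norm (u x))\<^sup>2)"
    using u by (simp add: L2_def)
  then have "integrable (lebesgue_on \<Omega>) (\<lambda>x. (norm (T (u x)))\<^sup>2)"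
  proof (rule Bochner_Integration.integrable_bound)
    show "(\<lambda>x. (norm (T (u x)))\<^sup>2) \<in> borel_measurable (lebesgue_on \<Omega>)"
      using meas by simp
    show "AE x in lebesgue_on \<Omega>. norm ((norm (T (u x)))\<^sup>2) \<le> norm (K\<^sup>2 * (norm (u x))\<^sup>2)"
      using bound by (intro AE_I2) simp
  qed
  with meas show ?thesis by (simp add: L2_def)
qed

lemma L2_diff:
  assumes u: "L2 \<Omega> u" and w: "L2 \<Omega> w"
  shows "L2 \<Omega> (\<lambda>x. u x - w x)"
proof -
  have "integrable (lebesgue_on \<Omega>) (\<lambda>x. 2 * (norm (u x))\<^sup>2 + 2 * (norm (w x))\<^sup>2)"
    using u w by (simp add: L2_def)
  then have "integrable (lebesgue_on \<Omega>) (\<lambda>x. (norm (u x - w x))\<^sup>2)"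
  proof (rule Bochner_Integration.integrable_bound)
    show "(\<lambda>x. (norm (u x - w x))\<^sup>2) \<in> borel_measurable (lebesgue_on \<Omega>)"
      using u w by (auto simp: L2_def)
    have "(norm (u x - w x))\<^sup>2 \<le> 2 * (norm (u x))\<^sup>2 + 2 * (norm (w x))\<^sup>2" for x
    proof -
      have "(norm (u x - w x))\<^sup>2 \<le> (norm (u x) + norm (w x))\<^sup>2"
        by (intro power_mono norm_triangle_ineq4) simp
      also have "\<dots> \<le> 2 * (norm (u x))\<^sup>2 + 2 * (norm (w x))\<^sup>2"
        using sum_squares_bound[of "norm (u x)" "norm (w x)"] by (simp add: power2_sum)
      finally show ?thesis .
    qed
    then show "AE x in lebesgue_on \<Omega>. norm ((norm (u x - w x))\<^sup>2) \<le> norm (2 * (norm (u x))\<^sup>2 + 2 * (norm (w x))\<^sup>2)"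
      by (intro AE_I2) simp
  qed
  with u w show ?thesis by (auto simp: L2_def)
qed

lemma L2_bounded_continuous:
  assumes "\<Omega> \<in> lmeasurable" "continuous_on UNIV f" "\<And>x. norm (f x) \<le> B"
  shows "L2 \<Omega> f"
proof -
  have meas: "f \<in> borel_measurable (lebesgue_on \<Omega>)"
    using assms(2) by (intro measurable_restrict_space1 measurable_completion) (simp add: borel_measurable_continuous_onI)
  have "integrable (lebesgue_on \<Omega>) (\<lambda>x. (norm (f x))\<^sup>2)"
  proof (rule finite_measure.integrable_const_bound[OF finite_measure_lebesgue_on[OF assms(1)]])
    show "AE x in lebesgue_on \<Omega>. norm ((norm (f x))\<^sup>2) \<le> B\<^sup>2"
      using assms(3) by (intro AE_I2) (simp add: power_mono)
  qed (use meas in simp)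
  with meas show ?thesis by (simp add: L2_def)
qed

lemma L2_compact_support:
  assumes "\<Omega> \<in> lmeasurable" "continuous_on UNIV f" "compact K" "\<And>x. x \<notin> K \<Longrightarrow> f x = 0"
  shows "L2 \<Omega> f"
  using bounded_compact_support[OF assms(2-4)] L2_bounded_continuous[OF assms(1,2)] by metis

lemma integrable_norm_mult_L2:
  assumes u: "L2 \<Omega> u" and w: "L2 \<Omega> w"
  shows "integrable (lebesgue_on \<Omega>) (\<lambda>x. norm (u x) * norm (w x))"
proof -
  have "integrable (lebesgue_on \<Omega>) (\<lambda>x. (norm (u x))\<^sup>2 + (norm (w x))\<^sup>2)"
    using u w by (simp add: L2_def)
  then show ?thesis
  proof (rule Bochner_Integration.integrable_bound)
    show "(\<lambda>x. norm (u x) * norm (w x)) \<in> borel_measurable (lebesgue_on \<Omega>)"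
      using u w by (auto simp: L2_def)
    have "norm (u x) * norm (w x) \<le> (norm (u x))\<^sup>2 + (norm (w x))\<^sup>2" for x
      using sum_squares_bound[of "norm (u x)" "norm (w x)"] mult_nonneg_nonneg[OF norm_ge_zero norm_ge_zero, of "u x" "w x"]
      by linarith
    then show "AE x in lebesgue_on \<Omega>. norm (norm (u x) * norm (w x)) \<le> norm ((norm (u x))\<^sup>2 + (norm (w x))\<^sup>2)"
      by (intro AE_I2) simp
  qed
qed

lemma integrable_inner_L2:
  assumes u: "L2 \<Omega> u" and w: "L2 \<Omega> w"
  shows "integrable (lebesgue_on \<Omega>) (\<lambda>x. u x \<bullet> w x)"
  using integrable_norm_mult_L2[OF u w]
proof (rule Bochner_Integration.integrable_bound)
  show "(\<lambda>x. u x \<bullet> w x) \<in> borel_measurable (lebesgue_on \<Omega>)"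
    using u w by (intro borel_measurable_inner) (simp_all add: L2_def)
  show "AE x in lebesgue_on \<Omega>. norm (u x \<bullet> w x) \<le> norm (norm (u x) * norm (w x))"
    by (intro AE_I2) (simp add: Cauchy_Schwarz_ineq2)
qed

lemma L2norm_nonneg: "L2norm \<Omega> f \<ge> 0"
  unfolding L2norm_def by (intro real_sqrt_ge_zero integral_nonneg_AE) simp

lemma L2norm_squared: "(L2norm \<Omega> f)\<^sup>2 = (\<integral>x. (norm (f x))\<^sup>2 \<partial>(lebesgue_on \<Omega>))"
  unfolding L2norm_def by (intro real_sqrt_pow2 integral_nonneg_AE) simp

lemma L2norm_scaleR: "L2norm \<Omega> (\<lambda>x. c *\<^sub>R u x) = \<bar>c\<bar> * L2norm \<Omega> u"
  by (simp add: L2norm_def power_mult_distrib real_sqrt_mult)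

lemma L2_inner_le:
  assumes u: "L2 \<Omega> u" and w: "L2 \<Omega> w"
  shows "\<bar>\<integral>x. u x \<bullet> w x \<partial>(lebesgue_on \<Omega>)\<bar> \<le> L2norm \<Omega> u * L2norm \<Omega> w"
proof -
  let ?M = "lebesgue_on \<Omega>"
  define I where "I = (\<integral>x. norm (u x) * norm (w x) \<partial>?M)"
  define A where "A = (\<integral>x. (norm (u x))\<^sup>2 \<partial>?M)"
  define B where "B = (\<integral>x. (norm (w x))\<^sup>2 \<partial>?M)"
  have "A \<ge> 0" "B \<ge> 0" "I \<ge> 0"
    unfolding A_def B_def I_def by (simp_all add: integral_nonneg_AE)
  have nn: "(\<integral>\<^sup>+x. ennreal (f x) \<partial>?M) = ennreal (integral\<^sup>L ?M f)"
    if "integrable ?M f" "\<And>x. f x \<ge> 0" for f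
    using that by (intro nn_integral_eq_integral) simp_all
  have "(\<integral>\<^sup>+x. ennreal (norm (u x)) * ennreal (norm (w x)) \<partial>?M)\<^sup>2
      \<le> (\<integral>\<^sup>+x. ennreal (norm (u x)) ^ 2 \<partial>?M) * (\<integral>\<^sup>+x. ennreal (norm (w x)) ^ 2 \<partial>?M)"
    using u w by (intro Cauchy_Schwarz_nn_integral) (auto simp: L2_def)
  then have "ennreal (I\<^sup>2) \<le> ennreal (A * B)"
    using nn[OF integrable_norm_mult_L2[OF u w]] nn[of "\<lambda>x. (norm (u x))\<^sup>2"] nn[of "\<lambda>x. (norm (w x))\<^sup>2"] u w
      \<open>A \<ge> 0\<close> \<open>I \<ge> 0\<close>
    by (simp add: L2_def ennreal_mult[symmetric] ennreal_power I_def A_def B_def)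
  then have "I\<^sup>2 \<le> A * B"
    using \<open>A \<ge> 0\<close> \<open>B \<ge> 0\<close> by simp
  then have "I \<le> sqrt A * sqrt B"
    by (metis real_le_rsqrt real_sqrt_mult)
  moreover have "\<bar>\<integral>x. u x \<bullet> w x \<partial>?M\<bar> \<le> I"
    unfolding I_def using integrable_inner_L2[OF u w] integrable_norm_mult_L2[OF u w]
    by (intro order.trans[OF integral_abs_bound] integral_mono) (simp_all add: Cauchy_Schwarz_ineq2)
  ultimately show ?thesis
    by (simp add: L2norm_def A_def B_def)
qed

lemma tendsto_integral_inner_L2:
  assumes a: "L2 \<Omega> a" and bs: "\<And>k. L2 \<Omega> (bs k)" and b: "L2 \<Omega> b"
    and lim: "(\<lambda>k. L2norm \<Omega> (\<lambda>x. bs k x - b x)) \<longlonglongrightarrow> 0"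
  shows "(\<lambda>k. \<integral>x. a x \<bullet> bs k x \<partial>(lebesgue_on \<Omega>)) \<longlonglongrightarrow> (\<integral>x. a x \<bullet> b x \<partial>(lebesgue_on \<Omega>))"
proof -
  have diff: "(\<integral>x. a x \<bullet> bs k x \<partial>(lebesgue_on \<Omega>)) - (\<integral>x. a x \<bullet> b x \<partial>(lebesgue_on \<Omega>))
      = (\<integral>x. a x \<bullet> (bs k x - b x) \<partial>(lebesgue_on \<Omega>))" for k
    using integrable_inner_L2[OF a bs] integrable_inner_L2[OF a b]
    by (simp add: inner_diff_right Bochner_Integration.integral_diff)
  have "(\<lambda>k. \<integral>x. a x \<bullet> (bs k x - b x) \<partial>(lebesgue_on \<Omega>)) \<longlonglongrightarrow> 0"
  proof (rule Lim_null_comparison)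
    show "\<forall>\<^sub>F k in sequentially. norm (\<integral>x. a x \<bullet> (bs k x - b x) \<partial>(lebesgue_on \<Omega>))
        \<le> L2norm \<Omega> a * L2norm \<Omega> (\<lambda>x. bs k x - b x)"
      using L2_inner_le[OF a L2_diff[OF bs b]] by simp
    show "(\<lambda>k. L2norm \<Omega> a * L2norm \<Omega> (\<lambda>x. bs k x - b x)) \<longlonglongrightarrow> 0"
      using tendsto_mult_right_zero[OF lim] .
  qed
  then show ?thesis
    unfolding diff[symmetric] by (simp add: LIM_zero_iff)
qed

lemma L2norm_pos_continuous:
  assumes "open \<Omega>" "continuous_on UNIV w" "c \<in> \<Omega>" "w c \<noteq> 0" "L2 \<Omega> w"
  shows "L2norm \<Omega> w > 0"
proof (rule ccontr)
  define U where "U = \<Omega> \<inter> {x. w x \<noteq> 0}"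
  have U: "open U" "U \<noteq> {}"
    using assms(1-4) unfolding U_def by (auto intro!: open_Int open_Collect_neq continuous_on_const)
  then have "U \<in> sets lebesgue"
    by (simp add: borel_open sets_completionI_sets)
  assume "\<not> L2norm \<Omega> w > 0"
  then have "(\<integral>x. (norm (w x))\<^sup>2 \<partial>(lebesgue_on \<Omega>)) = 0"
    using L2norm_nonneg[of \<Omega> w] L2norm_squared[of \<Omega> w] by simp
  then have "AE x in lebesgue_on \<Omega>. w x = 0"
    using assms(5) by (subst (asm) integral_nonneg_eq_0_iff_AE) (auto simp: L2_def)
  moreover have "\<Omega> \<in> sets lebesgue"
    using assms(1) by (simp add: borel_open sets_completionI_sets)
  ultimately have "AE x in lebesgue. x \<in> \<Omega> \<longrightarrow> w x = 0"
    by (simp add: AE_restrict_space_iff)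
  then have "AE x in lebesgue. x \<notin> U"
    by eventually_elim (auto simp: U_def)
  then have "emeasure lebesgue U = 0"
    using AE_iff_measurable[OF \<open>U \<in> sets lebesgue\<close>, of "\<lambda>x. x \<notin> U"] by simp
  with \<open>U \<in> sets lebesgue\<close> have "negligible U"
    by (simp add: negligible_iff_emeasure0)
  with open_not_negligible[OF U] show False ..
qed

section \<open>Test functions and integration by parts\<close>

lemma test_funI:
  assumes "smooth \<phi>" "compact K" "K \<subseteq> \<Omega>" "\<And>x. x \<notin> K \<Longrightarrow> \<phi> x = 0"
  shows "test_fun \<Omega> \<phi>"
proof -
  have "closure {x. \<phi> x \<noteq> 0} \<subseteq> K"
    using assms(2,4) by (intro closure_minimal compact_imp_closed) auto
  moreover have "bounded {x. \<phi> x \<noteq> 0}"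
    using assms(4) by (intro bounded_subset[OF compact_imp_bounded[OF assms(2)]]) auto
  then have "compact (closure {x. \<phi> x \<noteq> 0})"
    by (simp add: compact_closure)
  ultimately show ?thesis
    using assms(1,3) unfolding test_fun_def by blast
qed

lemma test_funE:
  assumes "test_fun \<Omega> \<phi>"
  obtains K where "smooth \<phi>" "compact K" "K \<subseteq> \<Omega>" "\<And>x. x \<notin> K \<Longrightarrow> \<phi> x = 0"
  using assms closure_subset[of "{x. \<phi> x \<noteq> 0}"] unfolding test_fun_def by blast

lemma test_fun_bounded_linear:
  assumes "test_fun \<Omega> \<psi>" "bounded_linear L"
  shows "test_fun \<Omega> (\<lambda>x. L (\<psi> x))"
proof -
  obtain K where sm: "smooth \<psi>" and K: "compact K" "K \<subseteq> \<Omega>" "\<And>x. x \<notin> K \<Longrightarrow> \<psi> x = 0"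
    by (rule test_funE[OF assms(1)], rule that)
  show ?thesis
  proof (rule test_funI[OF smooth_bounded_linear_comp[OF assms(2) sm] K(1,2)])
    show "L (\<psi> x) = 0" if "x \<notin> K" for x
      using K(3)[OF that] linear_0[OF bounded_linear.linear[OF assms(2)]] by simp
  qed
qed

lemma test_fun_pd:
  assumes "test_fun \<Omega> \<phi>"
  shows "test_fun \<Omega> (pd j \<phi>)"
proof -
  obtain K where sm: "smooth \<phi>" and K: "compact K" "K \<subseteq> \<Omega>" "\<And>x. x \<notin> K \<Longrightarrow> \<phi> x = 0"
    by (rule test_funE[OF assms], rule that)
  show ?thesis
  proof (rule test_funI[OF smooth_pd[OF sm] K(1,2)])
    show "pd j \<phi> x = 0" if "x \<notin> K" for x
      by (rule pd_eq_0_outside[OF compact_imp_closed[OF K(1)] K(3) that])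
  qed
qed

lemma L2_test_fun:
  assumes "\<Omega> \<in> lmeasurable" "test_fun \<Omega> \<phi>"
  shows "L2 \<Omega> \<phi>"
  using assms(2) by (elim test_funE) (auto intro: L2_compact_support[OF assms(1)] smooth_continuous_on)

lemma jac_eq_pd:
  assumes "\<psi> differentiable (at x)"
  shows "jac \<psi> x = (\<chi> i j. pd j \<psi> x $ i)"
  unfolding jac_def using pd_bounded_linear_comp[OF bounded_linear_vec_nth assms] by simp

lemma L2_jac_test_fun:
  assumes \<Omega>: "\<Omega> \<in> lmeasurable" and \<psi>: "test_fun \<Omega> \<psi>"
  shows "L2 \<Omega> (jac \<psi>)"
proof -
  obtain K where sm: "smooth \<psi>" and K: "compact K" "K \<subseteq> \<Omega>" "\<And>x. x \<notin> K \<Longrightarrow> \<psi> x = 0"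
    by (rule test_funE[OF \<psi>], rule that)
  have jac: "jac \<psi> = (\<lambda>x. \<chi> i j. pd j \<psi> x $ i)"
    using jac_eq_pd smooth_differentiable[OF sm] by blast
  show ?thesis
  proof (rule L2_compact_support[OF \<Omega> _ K(1)])
    show "continuous_on UNIV (jac \<psi>)"
      unfolding jac by (intro continuous_on_vec_lambda continuous_on_component continuous_on_pd_smooth sm)
    show "jac \<psi> x = 0" if "x \<notin> K" for x
      unfolding jac using pd_eq_0_outside[OF compact_imp_closed[OF K(1)] K(3) that] by (simp add: vec_eq_iff)
  qed
qed

lemma integral_mult_pd_test_fun:
  fixes \<phi> G :: "real^'n::finite \<Rightarrow> real"
  assumes \<Omega>: "\<Omega> \<in> sets lebesgue" and \<phi>: "test_fun \<Omega> \<phi>" and G: "smooth G"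
  shows "(\<integral>x. G x * pd j \<phi> x \<partial>(lebesgue_on \<Omega>)) = - (\<integral>x. pd j G x * \<phi> x \<partial>(lebesgue_on \<Omega>))"
proof -
  obtain K where sm: "smooth \<phi>" and K: "compact K" "K \<subseteq> \<Omega>" "\<And>x. x \<notin> K \<Longrightarrow> \<phi> x = 0"
    by (rule test_funE[OF \<phi>], rule that)
  have diff: "(\<lambda>y. G y * \<phi> y) differentiable (at x)" for x
    using smooth_differentiable[OF G] smooth_differentiable[OF sm] by (simp add: differentiable_mult)
  have pd: "pd j (\<lambda>y. G y * \<phi> y) = (\<lambda>x. G x * pd j \<phi> x + pd j G x * \<phi> x)"
    using pd_mult smooth_differentiable[OF G] smooth_differentiable[OF sm] by blast
  have cont: "continuous_on UNIV (\<lambda>x. G x * pd j \<phi> x)" "continuous_on UNIV (\<lambda>x. pd j G x * \<phi> x)"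
    using continuous_on_mult[OF smooth_continuous_on[OF G] continuous_on_pd_smooth[OF sm]]
      continuous_on_mult[OF continuous_on_pd_smooth[OF G] smooth_continuous_on[OF sm]] by auto
  have "integral\<^sup>L (lebesgue_on \<Omega>) (pd j (\<lambda>y. G y * \<phi> y)) = 0"
    using K cont by (intro integral_pd_eq_0_on[OF diff _ K(1) _ K(2) \<Omega>]) (simp_all add: pd continuous_on_add)
  moreover have "integrable (lebesgue_on \<Omega>) (\<lambda>x. G x * pd j \<phi> x)"
    using pd_eq_0_outside[OF compact_imp_closed[OF K(1)] K(3)]
    by (intro integrable_on_compact_support[OF cont(1) K(1) _ \<Omega>]) simp
  moreover have "integrable (lebesgue_on \<Omega>) (\<lambda>x. pd j G x * \<phi> x)"
    using K(3) by (intro integrable_on_compact_support[OF cont(2) K(1) _ \<Omega>]) simp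
  ultimately show ?thesis
    unfolding pd by (simp add: Bochner_Integration.integral_add)
qed

lemma H1_0_test_fun:
  fixes \<psi> :: "real^'n::finite \<Rightarrow> real^'n"
  assumes \<Omega>: "\<Omega> \<in> lmeasurable" and \<psi>: "test_fun \<Omega> \<psi>"
  shows "H1_0 \<Omega> \<psi> (jac \<psi>)"
  unfolding H1_0_def
proof (intro conjI exI[of _ "\<lambda>_. \<psi>"])
  have sm: "smooth \<psi>"
    using \<psi> by (simp add: test_fun_def)
  show "vweak_grad \<Omega> \<psi> (jac \<psi>)"
    unfolding vweak_grad_def weak_grad_def
  proof (intro allI impI)
    fix i j :: 'n and \<phi> :: "real^'n \<Rightarrow> real"
    assume "test_fun \<Omega> \<phi>"
    then have "(\<integral>x. \<psi> x $ i * pd j \<phi> x \<partial>(lebesgue_on \<Omega>)) = - (\<integral>x. pd j (\<lambda>y. \<psi> y $ i) x * \<phi> x \<partial>(lebesgue_on \<Omega>))"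
      using \<Omega> by (intro integral_mult_pd_test_fun smooth_bounded_linear_comp[OF bounded_linear_vec_nth sm]) auto
    then show "(\<integral>x. \<psi> x $ i * pd j \<phi> x \<partial>(lebesgue_on \<Omega>)) = - (\<integral>x. jac \<psi> x $ i $ j * \<phi> x \<partial>(lebesgue_on \<Omega>))"
      by (simp add: jac_def)
  qed
qed (simp_all add: L2_test_fun[OF \<Omega> \<psi>] L2_jac_test_fun[OF \<Omega> \<psi>] L2norm_def \<psi>)

lemma divg_eq_inner_mat: "divg D x = mat 1 \<bullet> D x"
proof -
  have "mat 1 $ i \<bullet> D x $ i = D x $ i $ i" for i
    by (simp add: inner_vec_def mat_def if_distrib[of "\<lambda>a. a * _"] cong: if_cong)
  then show ?thesis
    by (simp add: divg_def inner_vec_def[of "mat 1"])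
qed

lemma integral_weak_grad_inner_test_fun:
  fixes \<psi> :: "real^'n::finite \<Rightarrow> real^'n"
  assumes \<Omega>: "\<Omega> \<in> lmeasurable" and \<psi>: "test_fun \<Omega> \<psi>" and q: "H1 \<Omega> q G"
  shows "(\<integral>x. G x \<bullet> \<psi> x \<partial>(lebesgue_on \<Omega>)) = - (\<integral>x. q x * divg (jac \<psi>) x \<partial>(lebesgue_on \<Omega>))"
proof -
  let ?M = "lebesgue_on \<Omega>"
  have \<psi>i: "test_fun \<Omega> (\<lambda>x. \<psi> x $ i)" for i
    using test_fun_bounded_linear[OF \<psi> bounded_linear_vec_nth] .
  have Lq: "L2 \<Omega> q" "L2 \<Omega> (\<lambda>x. G x $ i)" for i
    using q L2_bounded_linear[OF bounded_linear_vec_nth] by (auto simp: H1_def)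
  have int1: "integrable ?M (\<lambda>x. G x $ i * \<psi> x $ i)" for i
    using integrable_inner_L2[OF Lq(2) L2_test_fun[OF \<Omega> \<psi>i]] by (simp add: inner_real_def)
  have int2: "integrable ?M (\<lambda>x. q x * pd i (\<lambda>y. \<psi> y $ i) x)" for i
    using integrable_inner_L2[OF Lq(1) L2_test_fun[OF \<Omega> test_fun_pd[OF \<psi>i]]] by (simp add: inner_real_def)
  have weak: "(\<integral>x. q x * pd i (\<lambda>y. \<psi> y $ i) x \<partial>?M) = - (\<integral>x. G x $ i * \<psi> x $ i \<partial>?M)" for i
    using q \<psi>i[of i] unfolding H1_def weak_grad_def by simp
  have "(\<integral>x. G x \<bullet> \<psi> x \<partial>?M) = (\<integral>x. (\<Sum>i\<in>UNIV. G x $ i * \<psi> x $ i) \<partial>?M)"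
    by (simp add: inner_vec_def inner_real_def)
  also have "\<dots> = (\<Sum>i\<in>UNIV. \<integral>x. G x $ i * \<psi> x $ i \<partial>?M)"
    by (rule Bochner_Integration.integral_sum) (rule int1)
  also have "\<dots> = - (\<Sum>i\<in>UNIV. \<integral>x. q x * pd i (\<lambda>y. \<psi> y $ i) x \<partial>?M)"
    by (simp add: weak sum_negf)
  also have "\<dots> = - (\<integral>x. (\<Sum>i\<in>UNIV. q x * pd i (\<lambda>y. \<psi> y $ i) x) \<partial>?M)"
    by (subst Bochner_Integration.integral_sum) (rule int2, rule refl)
  also have "\<dots> = - (\<integral>x. q x * divg (jac \<psi>) x \<partial>?M)"
    by (simp add: divg_def jac_def sum_distrib_left)
  finally show ?thesis .
qed

lemma integral_weak_grad_inner_H1_0: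
  assumes \<Omega>: "\<Omega> \<in> lmeasurable" and w: "H1_0 \<Omega> w Dw" and q: "H1 \<Omega> q G"
  shows "(\<integral>x. G x \<bullet> w x \<partial>(lebesgue_on \<Omega>)) = - (\<integral>x. q x * divg Dw x \<partial>(lebesgue_on \<Omega>))"
proof -
  let ?M = "lebesgue_on \<Omega>"
  obtain \<psi> where \<psi>: "\<And>k. test_fun \<Omega> (\<psi> k)"
    and lim_\<psi>: "(\<lambda>k. L2norm \<Omega> (\<lambda>x. \<psi> k x - w x)) \<longlonglongrightarrow> 0"
    and lim_jac: "(\<lambda>k. L2norm \<Omega> (\<lambda>x. jac (\<psi> k) x - Dw x)) \<longlonglongrightarrow> 0"
    using w unfolding H1_0_def by blast
  have Lw: "L2 \<Omega> w" "L2 \<Omega> Dw"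
    using w by (simp_all add: H1_0_def)
  have Lq: "L2 \<Omega> G" "L2 \<Omega> (\<lambda>x. q x *\<^sub>R mat 1)"
    using q L2_bounded_linear[OF bounded_linear_scaleR_left] by (auto simp: H1_def)
  have q_divg: "q x * divg D x = (q x *\<^sub>R mat 1) \<bullet> D x" for D x
    by (simp add: divg_eq_inner_mat)
  have "(\<lambda>k. \<integral>x. G x \<bullet> \<psi> k x \<partial>?M) \<longlonglongrightarrow> (\<integral>x. G x \<bullet> w x \<partial>?M)"
    by (rule tendsto_integral_inner_L2[OF Lq(1) L2_test_fun[OF \<Omega> \<psi>] Lw(1) lim_\<psi>])
  moreover have "(\<lambda>k. \<integral>x. G x \<bullet> \<psi> k x \<partial>?M) \<longlonglongrightarrow> - (\<integral>x. q x * divg Dw x \<partial>?M)"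
    unfolding integral_weak_grad_inner_test_fun[OF \<Omega> \<psi> q] q_divg
    by (intro tendsto_minus tendsto_integral_inner_L2[OF Lq(2) L2_jac_test_fun[OF \<Omega> \<psi>] Lw(2) lim_jac])
  ultimately show ?thesis
    by (rule LIMSEQ_unique)
qed

lemma H1_const:
  fixes \<Omega> :: "(real^'n::finite) set"
  assumes "\<Omega> \<in> lmeasurable"
  shows "H1 \<Omega> (\<lambda>_. a) (\<lambda>_. 0)"
  unfolding H1_def weak_grad_def
proof (intro conjI allI impI)
  show "L2 \<Omega> (\<lambda>_. a)" "L2 \<Omega> (\<lambda>_. 0)"
    by (rule L2_bounded_continuous[OF assms], simp, rule order_refl)+
  fix \<phi> :: "real^'n \<Rightarrow> real" and j
  assume \<phi>: "test_fun \<Omega> \<phi>"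
  obtain K where "smooth \<phi>" "compact K" "K \<subseteq> \<Omega>" "\<And>x. x \<notin> K \<Longrightarrow> \<phi> x = 0"
    by (rule test_funE[OF \<phi>], rule that)
  then have "integral\<^sup>L (lebesgue_on \<Omega>) (pd j \<phi>) = 0"
    using assms by (intro integral_pd_eq_0_on smooth_differentiable continuous_on_pd_smooth) auto
  then show "(\<integral>x. a * pd j \<phi> x \<partial>(lebesgue_on \<Omega>)) = - (\<integral>x. 0 $ j * \<phi> x \<partial>(lebesgue_on \<Omega>))"
    by simp
qed

lemma integral_divg_H1_0:
  assumes "\<Omega> \<in> lmeasurable" "H1_0 \<Omega> w Dw"
  shows "(\<integral>x. divg Dw x \<partial>(lebesgue_on \<Omega>)) = 0"
  using integral_weak_grad_inner_H1_0[OF assms H1_const[OF assms(1), of 1]] by simp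

lemma exists_test_fun_nonzero:
  fixes c :: "real^'n::finite"
  assumes "open \<Omega>" "c \<in> \<Omega>"
  obtains \<phi> :: "real^'n \<Rightarrow> real" where "test_fun \<Omega> \<phi>" "\<phi> c \<noteq> 0"
proof -
  obtain \<epsilon> where "\<epsilon> > 0" "ball c \<epsilon> \<subseteq> \<Omega>"
    using assms open_contains_ball by blast
  define r where "r = \<epsilon> / (2 * CARD('n))"
  have "r > 0"
    using \<open>\<epsilon> > 0\<close> by (simp add: r_def)
  define K where "K = cbox (c - (\<chi> i. r)) (c + (\<chi> i. r))"
  have K: "x \<in> K \<longleftrightarrow> (\<forall>i. \<bar>x $ i - c $ i\<bar> \<le> r)" for x
    unfolding K_def mem_box_cart by (intro all_cong1) (auto simp: abs_le_iff)
  have "K \<subseteq> ball c \<epsilon>"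
  proof
    fix x assume "x \<in> K"
    have "norm (x - c) \<le> (\<Sum>i\<in>UNIV. \<bar>x $ i - c $ i\<bar>)"
      using norm_le_l1_cart[of "x - c"] by simp
    also have "\<dots> \<le> CARD('n) * r"
      using \<open>x \<in> K\<close> K by (intro sum_bounded_above[where K=r, simplified]) blast
    also have "\<dots> < \<epsilon>"
      using \<open>\<epsilon> > 0\<close> by (simp add: r_def)
    finally show "x \<in> ball c \<epsilon>"
      by (simp add: dist_norm norm_minus_commute)
  qed
  show thesis
  proof (rule that)
    show "test_fun \<Omega> (box_bump c r (\<lambda>_. 0) (\<lambda>_. 0))"
    proof (rule test_funI[OF smooth_box_bump _ order_trans[OF \<open>K \<subseteq> ball c \<epsilon>\<close> \<open>ball c \<epsilon> \<subseteq> \<Omega>\<close>]])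
      show "compact K" by (simp add: K_def compact_cbox)
      show "box_bump c r (\<lambda>_. 0) (\<lambda>_. 0) x = 0" if "x \<notin> K" for x
        using that box_bump_nonzero_iff[of c r x] K[of x] by (metis less_imp_le)
    qed
    show "box_bump c r (\<lambda>_. 0) (\<lambda>_. 0) c \<noteq> 0"
      using \<open>r > 0\<close> by (simp add: box_bump_nonzero_iff)
  qed
qed

lemma Poincare_constant_pos:
  fixes \<Omega> :: "(real^'n::finite) set"
  assumes "bounded \<Omega>" "open \<Omega>" "\<Omega> \<noteq> {}"
    and PF: "\<And>w Dw. H1_0 \<Omega> w Dw \<Longrightarrow> L2norm \<Omega> w \<le> C * L2norm \<Omega> Dw"
  shows "C > 0"
proof -
  obtain c where "c \<in> \<Omega>"
    using assms(3) by blast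
  then obtain \<phi> :: "real^'n \<Rightarrow> real" where \<phi>: "test_fun \<Omega> \<phi>" "\<phi> c \<noteq> 0"
    using exists_test_fun_nonzero[OF assms(2)] by blast
  define \<psi> :: "real^'n \<Rightarrow> real^'n" where "\<psi> x = \<phi> x *\<^sub>R 1" for x
  have \<Omega>: "\<Omega> \<in> lmeasurable"
    using assms(1,2) by (rule lmeasurable_open)
  have \<psi>: "test_fun \<Omega> \<psi>"
    unfolding \<psi>_def by (rule test_fun_bounded_linear[OF \<phi>(1) bounded_linear_scaleR_left])
  have "0 < L2norm \<Omega> \<psi>"
  proof (rule L2norm_pos_continuous[OF assms(2) _ \<open>c \<in> \<Omega>\<close>])
    show "continuous_on UNIV \<psi>"
      using \<psi> by (simp add: test_fun_def smooth_continuous_on)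
    show "\<psi> c \<noteq> 0"
      using \<phi>(2) by (simp add: \<psi>_def)
  qed (rule L2_test_fun[OF \<Omega> \<psi>])
  also have "\<dots> \<le> C * L2norm \<Omega> (jac \<psi>)"
    by (rule PF[OF H1_0_test_fun[OF \<Omega> \<psi>]])
  finally show ?thesis
    using L2norm_nonneg[of \<Omega> "jac \<psi>"] by (simp add: zero_less_mult_iff)
qed

section \<open>The Stokes problem\<close>

lemma AE_divg_eq_0:
  assumes \<Omega>: "\<Omega> \<in> lmeasurable" and v: "H1_0 \<Omega> v Dv"
    and incompressible: "\<And>q. L2_0 \<Omega> q \<Longrightarrow> (\<integral>x. divg Dv x * q x \<partial>(lebesgue_on \<Omega>)) = 0"
  shows "AE x in lebesgue_on \<Omega>. divg Dv x = 0"
proof -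
  have "L2 \<Omega> (divg Dv)"
    using L2_bounded_linear[OF bounded_linear_inner_right, of \<Omega> Dv "mat 1"] v
    by (simp add: H1_0_def divg_eq_inner_mat[abs_def])
  moreover from this have "L2_0 \<Omega> (divg Dv)"
    using integral_divg_H1_0[OF \<Omega> v] by (simp add: L2_0_def)
  ultimately have "integrable (lebesgue_on \<Omega>) (\<lambda>x. (divg Dv x)\<^sup>2)"
    "(\<integral>x. (divg Dv x)\<^sup>2 \<partial>(lebesgue_on \<Omega>)) = 0"
    using incompressible by (simp_all add: L2_def power2_eq_square)
  then show ?thesis
    by (subst (asm) integral_nonneg_eq_0_iff_AE) auto
qed

lemma L2_sigma_V0:
  assumes "\<Omega> \<in> lmeasurable" "V0 \<Omega> w Dw"
  shows "L2_sigma \<Omega> w"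
  unfolding L2_sigma_def
proof (intro conjI allI impI)
  have w: "H1_0 \<Omega> w Dw" and div: "AE x in lebesgue_on \<Omega>. divg Dw x = 0"
    using assms(2) by (simp_all add: V0_def)
  then show "L2 \<Omega> w"
    by (simp add: H1_0_def)
  fix q G assume "H1 \<Omega> q G"
  have "(\<integral>x. q x * divg Dw x \<partial>(lebesgue_on \<Omega>)) = 0"
    by (rule integral_eq_zero_AE) (use div in \<open>eventually_elim, simp\<close>)
  with integral_weak_grad_inner_H1_0[OF assms(1) w \<open>H1 \<Omega> q G\<close>]
  show "(\<integral>x. G x \<bullet> w x \<partial>(lebesgue_on \<Omega>)) = 0"
    by simp
qed

lemma integral_inner_helmholtz_proj:
  assumes "L2 \<Omega> f" "helmholtz_proj \<Omega> f g" "L2_sigma \<Omega> w"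
  shows "(\<integral>x. f x \<bullet> w x \<partial>(lebesgue_on \<Omega>)) = (\<integral>x. g x \<bullet> w x \<partial>(lebesgue_on \<Omega>))"
proof -
  have g: "L2 \<Omega> g" and w: "L2 \<Omega> w"
    using assms(2,3) by (simp_all add: helmholtz_proj_def L2_sigma_def)
  have "(\<integral>x. (f x - g x) \<bullet> w x \<partial>(lebesgue_on \<Omega>))
      = (\<integral>x. f x \<bullet> w x \<partial>(lebesgue_on \<Omega>)) - (\<integral>x. g x \<bullet> w x \<partial>(lebesgue_on \<Omega>))"
    using integrable_inner_L2[OF assms(1) w] integrable_inner_L2[OF g w]
    by (simp add: inner_diff_left Bochner_Integration.integral_diff)
  with assms(2,3) show ?thesis
    by (simp add: helmholtz_proj_def)
qed

lemma momentum_equation_V0: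
  assumes \<Omega>: "\<Omega> \<in> lmeasurable" and f: "L2 \<Omega> f" and Pf: "helmholtz_proj \<Omega> f g" and \<psi>: "V0 \<Omega> \<psi> D\<psi>"
    and momentum: "\<nu> * (\<integral>x. Dv x \<bullet> D\<psi> x \<partial>(lebesgue_on \<Omega>)) - (\<integral>x. p x * divg D\<psi> x \<partial>(lebesgue_on \<Omega>))
      = (\<integral>x. f x \<bullet> \<psi> x \<partial>(lebesgue_on \<Omega>))"
  shows "\<nu> * (\<integral>x. Dv x \<bullet> D\<psi> x \<partial>(lebesgue_on \<Omega>)) = (\<integral>x. g x \<bullet> \<psi> x \<partial>(lebesgue_on \<Omega>))"
proof -
  have "(\<integral>x. p x * divg D\<psi> x \<partial>(lebesgue_on \<Omega>)) = 0"
    using \<psi> unfolding V0_def by (intro integral_eq_zero_AE) (auto elim: AE_mp)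
  with momentum integral_inner_helmholtz_proj[OF f Pf L2_sigma_V0[OF \<Omega> \<psi>]] show ?thesis
    by simp
qed

lemma energy_estimate:
  assumes "\<nu> > 0" "C \<ge> 0" "L2 \<Omega> g" "L2 \<Omega> v"
    and identity: "\<nu> * (\<integral>x. Dv x \<bullet> Dv x \<partial>(lebesgue_on \<Omega>)) = (\<integral>x. g x \<bullet> v x \<partial>(lebesgue_on \<Omega>))"
    and PF: "L2norm \<Omega> v \<le> C * L2norm \<Omega> Dv"
  shows "L2norm \<Omega> Dv \<le> C / \<nu> * L2norm \<Omega> g"
proof -
  let ?N = "L2norm \<Omega> Dv"
  have "(\<integral>x. Dv x \<bullet> Dv x \<partial>(lebesgue_on \<Omega>)) = ?N\<^sup>2"
    by (simp add: L2norm_squared power2_norm_eq_inner)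
  with identity have "\<nu> * ?N * ?N = (\<integral>x. g x \<bullet> v x \<partial>(lebesgue_on \<Omega>))"
    by (simp add: power2_eq_square mult.assoc)
  also have "\<dots> \<le> L2norm \<Omega> g * L2norm \<Omega> v"
    using L2_inner_le[OF assms(3,4)] by simp
  also have "\<dots> \<le> C * L2norm \<Omega> g * ?N"
    using mult_left_mono[OF PF L2norm_nonneg[of \<Omega> g]] by (simp add: ac_simps)
  finally have "\<nu> * ?N * ?N \<le> C * L2norm \<Omega> g * ?N" .
  then have "\<nu> * ?N \<le> C * L2norm \<Omega> g"
    using L2norm_nonneg[of \<Omega> Dv] L2norm_nonneg[of \<Omega> g] assms(2)
    by (cases "?N = 0") (simp_all add: mult_le_cancel_right)
  with assms(1) show ?thesis
    by (simp add: field_simps)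
qed

theorem lemma3p2:
  fixes \<Omega> :: "(real^'n::finite) set"
    and \<nu> C :: real
    and f :: "real^'n \<Rightarrow> real^'n"
    and v :: "real^'n \<Rightarrow> real^'n"
    and Dv :: "real^'n \<Rightarrow> real^'n^'n"
    and p :: "real^'n \<Rightarrow> real"
    and g :: "real^'n \<Rightarrow> real^'n"
  assumes dom: "lipschitz_domain \<Omega>" "bounded \<Omega>"
    and nu: "\<nu> > 0"
    and f: "L2 \<Omega> f"
    and v: "H1_0 \<Omega> v Dv"
    and p: "L2_0 \<Omega> p"
    and eq1: "\<forall>w Dw. H1_0 \<Omega> w Dw \<longrightarrow>
       \<nu> * (\<integral>x. Dv x \<bullet> Dw x \<partial>(lebesgue_on \<Omega>)) - (\<integral>x. p x * divg Dw x \<partial>(lebesgue_on \<Omega>))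
         = (\<integral>x. f x \<bullet> w x \<partial>(lebesgue_on \<Omega>))"
    and eq2: "\<forall>q. L2_0 \<Omega> q \<longrightarrow> (\<integral>x. divg Dv x * q x \<partial>(lebesgue_on \<Omega>)) = 0"
    and PF: "\<forall>w Dw. H1_0 \<Omega> w Dw \<longrightarrow> L2norm \<Omega> w \<le> C * L2norm \<Omega> Dw"
    and Pf: "helmholtz_proj \<Omega> f g"
  shows "L2norm \<Omega> Dv \<le> C / \<nu> * L2norm \<Omega> g
    \<and> (\<forall>\<psi> D\<psi>. V0 \<Omega> \<psi> D\<psi> \<longrightarrow>
          - (\<integral>x. Dv x \<bullet> D\<psi> x \<partial>(lebesgue_on \<Omega>))
            = (\<integral>x. (- (1 / \<nu>) *\<^sub>R g x) \<bullet> \<psi> x \<partial>(lebesgue_on \<Omega>)))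
    \<and> C / \<nu> * L2norm \<Omega> g = C * L2norm \<Omega> (\<lambda>x. - (1 / \<nu>) *\<^sub>R g x)"
proof -
  have \<Omega>: "open \<Omega>" "\<Omega> \<noteq> {}" "\<Omega> \<in> lmeasurable"
    using dom lmeasurable_open by (auto simp: lipschitz_domain_def)
  have "C > 0"
    using PF by (intro Poincare_constant_pos[OF dom(2) \<Omega>(1,2)]) blast
  have "V0 \<Omega> v Dv"
    using v eq2 AE_divg_eq_0[OF \<Omega>(3) v] by (simp add: V0_def)
  have tested: "\<nu> * (\<integral>x. Dv x \<bullet> D\<psi> x \<partial>(lebesgue_on \<Omega>)) = (\<integral>x. g x \<bullet> \<psi> x \<partial>(lebesgue_on \<Omega>))"
    if "V0 \<Omega> \<psi> D\<psi>" for \<psi> D\<psi>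
    using that eq1 by (intro momentum_equation_V0[OF \<Omega>(3) f Pf]) (auto simp: V0_def)
  have "L2norm \<Omega> Dv \<le> C / \<nu> * L2norm \<Omega> g"
    using \<open>C > 0\<close> v Pf PF
    by (intro energy_estimate[OF nu _ _ _ tested[OF \<open>V0 \<Omega> v Dv\<close>]])
      (auto simp: H1_0_def helmholtz_proj_def L2_sigma_def)
  moreover have "- (\<integral>x. Dv x \<bullet> D\<psi> x \<partial>(lebesgue_on \<Omega>)) = (\<integral>x. (- (1 / \<nu>) *\<^sub>R g x) \<bullet> \<psi> x \<partial>(lebesgue_on \<Omega>))"
    if "V0 \<Omega> \<psi> D\<psi>" for \<psi> D\<psi>
    using tested[OF that] nu by (simp add: field_simps)
  moreover have "C / \<nu> * L2norm \<Omega> g = C * L2norm \<Omega> (\<lambda>x. - (1 / \<nu>) *\<^sub>R g x)"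
    using nu L2norm_scaleR[of \<Omega> "- (1 / \<nu>)" g] by simp
  ultimately show ?thesis
    by blast
qed

end
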